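(* Let $\mathcal{S}=\{S_1,\dots,S_N\}\subseteq 2^{[n]}$ be a nonempty Sperner family ($N\ge1$) and $h:\mathcal{S}\to 2^{[n]}$ a function with $H_i=h(S_i)\subseteq S_i$ for every $i\in[N]$. If $G_{\mathcal{S},h}$ is the complete graph on $N$ vertices, then there exists $S_0\in\mathcal{S}$ such that $\mathcal{Q}_{S_0,h(S_0)}\not\subseteq\bigcup_{S\in\mathcal{S}\setminus\{S_0\}}\mathcal{Q}_{S,h(S)}$.
   Context: $[n]=\{1,\dots,n\}$. A Sperner family is a family of sets none of which is contained in another. For $H\subseteq S\subseteq[n]$, $\mathcal{Q}_{S,H}=\{H\cup B: B\subseteq[n]\setminus S\}$. The graph $G_{\mathcal{S},h}$ has vertex set $\{(S_i,H_i): i\in[N]\}$, and two distinct vertices $(S_i,H_i)$, $(S_j,H_j)$ are adjacent if and only if $S_i\cap H_j=S_j\cap H_i$. *)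

theory Defs
  imports Main
begin

definition Qfam :: "nat \<Rightarrow> nat set \<Rightarrow> nat set \<Rightarrow> nat set set" where
  "Qfam n S H = {H \<union> B | B. B \<subseteq> {1..n} - S}"

definition sperner :: "'a set set \<Rightarrow> bool" where
  "sperner F \<longleftrightarrow> (\<forall>A\<in>F. \<forall>B\<in>F. A \<subseteq> B \<longrightarrow> A = B)"

text \<open>Adjacency in G_{S,h}: distinct vertices (S,h S),(T,h T) adjacent iff S \<inter> h T = T \<inter> h S.\<close>
definition G_adj :: "(nat set \<Rightarrow> nat set) \<Rightarrow> nat set \<Rightarrow> nat set \<Rightarrow> bool" where
  "G_adj h S T \<longleftrightarrow> S \<inter> h T = T \<inter> h S"

definition G_complete :: "nat set set \<Rightarrow> (nat set \<Rightarrow> nat set) \<Rightarrow> bool" where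
  "G_complete F h \<longleftrightarrow> (\<forall>S\<in>F. \<forall>T\<in>F. S \<noteq> T \<longrightarrow> G_adj h S T)"

end

theory Submission
  imports Defs
begin

text \<open>Any member S0 of the family works. With H the union of all h S, take
  X = h S0 \<union> ([n] - S0 - H), which lies in Q_{S0,h S0}. Every X in Q_{S,h S} satisfies
  X \<inter> S = h S, and completeness of the graph forces S \<inter> H = h S. For S \<noteq> S0 the Sperner
  property gives x \<in> S - S0; then x \<in> X iff x \<notin> H, whereas x \<in> h S iff x \<in> H.\<close>

lemma Qfam_Int_eq:
  assumes "X \<in> Qfam n S H" and "H \<subseteq> S"
  shows "X \<inter> S = H"
  using assms unfolding Qfam_def by blast

lemma G_complete_Int_Union_eq:
  assumes "G_complete F h" and "\<forall>T\<in>F. h T \<subseteq> T" and "S \<in> F"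
  shows "S \<inter> \<Union>(h ` F) = h S"
proof
  show "S \<inter> \<Union>(h ` F) \<subseteq> h S"
  proof
    fix x assume "x \<in> S \<inter> \<Union>(h ` F)"
    then obtain T where T: "T \<in> F" "x \<in> h T" "x \<in> S" by blast
    show "x \<in> h S"
    proof (cases "T = S")
      case False
      with assms(1,3) T(1) have "S \<inter> h T = T \<inter> h S"
        unfolding G_complete_def G_adj_def by blast
      with T show ?thesis by blast
    qed (use T in simp)
  qed
  show "h S \<subseteq> S \<inter> \<Union>(h ` F)" using assms(2,3) by blast
qed

lemma sperner_obtain_diff:
  assumes "sperner F" and "S \<in> F" and "T \<in> F" and "S \<noteq> T"
  obtains x where "x \<in> S" and "x \<notin> T"
proof -
  have "\<not> S \<subseteq> T" using assms unfolding sperner_def by blast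
  then show ?thesis using that by blast
qed

theorem claim20:
  fixes n :: nat and F :: "nat set set" and h :: "nat set \<Rightarrow> nat set"
  assumes "F \<noteq> {}"
    and "\<forall>S\<in>F. S \<subseteq> {1..n}"
    and "sperner F"
    and "\<forall>S\<in>F. h S \<subseteq> S"
    and "G_complete F h"
  shows "\<exists>S0\<in>F. \<not> (Qfam n S0 (h S0) \<subseteq> (\<Union>S\<in>F - {S0}. Qfam n S (h S)))"
proof -
  obtain S0 where S0: "S0 \<in> F" using assms(1) by blast
  define H where "H = \<Union>(h ` F)"
  define X where "X = h S0 \<union> ({1..n} - S0 - H)"
  have "X \<in> Qfam n S0 (h S0)" unfolding Qfam_def X_def by blast
  moreover have "X \<notin> Qfam n S (h S)" if S: "S \<in> F" "S \<noteq> S0" for S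
  proof
    assume "X \<in> Qfam n S (h S)"
    then have "X \<inter> S = h S" using Qfam_Int_eq assms(4) S(1) by blast
    also have "\<dots> = S \<inter> H"
      unfolding H_def using G_complete_Int_Union_eq[OF assms(5,4) S(1)] by simp
    finally have "X \<inter> S = S \<inter> H" .
    obtain x where x: "x \<in> S" "x \<notin> S0"
      using sperner_obtain_diff[OF assms(3) S(1) S0 S(2)] .
    have "h S0 \<subseteq> S0" "S \<subseteq> {1..n}" using assms(2,4) S0 S(1) by simp_all
    then have "x \<in> X \<longleftrightarrow> x \<notin> H" using x unfolding X_def by auto
    with \<open>X \<inter> S = S \<inter> H\<close> x(1) show False by blast
  qed
  ultimately show ?thesis using S0 by blast
qed

end
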